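(* Let $f$ be a non-negative multiplicative arithmetic function, let $\tau>0$ and let $B_f$ be any real constant; define $E_f(x)$ for $x\ge1$ by $$\sum_{n\le x}\frac{\Lambda_f(n)}{n}=\tau\log x+B_f+E_f(x).$$ Suppose there exist constants $D_-,D_+,x_0$ such that for every $x\ge x_0$, $$D_-\mu_f(x)\le B_f\mu_f(x)+\sum_{n\le x}\frac{f(n)}{n}E_f\!\left(\frac xn\right)\le D_+\mu_f(x).$$ Then for every $x>\max\{x_0,\exp(D_+)\}$, $$\frac{C_f}{\tau}\log^\tau x\,\frac{\left(1-\frac{D_+}{\log x}\right)^{\tau+1}}{1-\frac{D_-}{\log x}}\le\mu_f(x)\le\frac{C_f}{\tau}\log^\tau x\,\frac{\left(1-\frac{D_-}{\log x}\right)^{\tau+1}}{1-\frac{D_+}{\log x}},$$ where $C_f:=\frac1{\Gamma(\tau)}\lim_{s\to1+0}(s-1)^\tau L_f(s)$.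
   Context: For a multiplicative $f$ (so $f(1)=1$): $L_f(s)=\sum_{n\ge1}f(n)n^{-s}$; $\mu_f(x)=\sum_{n\le x}f(n)/n$; $\Lambda_f$ is defined by $f(n)\log n=\sum_{d\mid n}f(d)\Lambda_f(n/d)$ for all $n\ge1$ (equivalently $-L_f'/L_f=\sum_n\Lambda_f(n)n^{-s}$ as formal Dirichlet series). $\Gamma$ is the gamma function. *)

theory Defs
  imports "HOL-Analysis.Analysis"
begin

definition multiplicative :: "(nat \<Rightarrow> real) \<Rightarrow> bool" where
  "multiplicative f \<longleftrightarrow> f 1 = 1 \<and> (\<forall>m n. coprime m n \<longrightarrow> f (m * n) = f m * f n)"

definition Lser :: "(nat \<Rightarrow> real) \<Rightarrow> real \<Rightarrow> real" where
  "Lser f s = (\<Sum>n. f (Suc n) / (real (Suc n)) powr s)"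

definition muf :: "(nat \<Rightarrow> real) \<Rightarrow> real \<Rightarrow> real" where
  "muf f x = (\<Sum>n\<in>{1..nat \<lfloor>x\<rfloor>}. f n / real n)"

definition Ef :: "(nat \<Rightarrow> real) \<Rightarrow> real \<Rightarrow> real \<Rightarrow> real \<Rightarrow> real" where
  "Ef Lam tau B x = (\<Sum>n\<in>{1..nat \<lfloor>x\<rfloor>}. Lam n / real n) - tau * ln x - B"

end

theory Submission
  imports Defs "HOL-Real_Asymp.Real_Asymp"
begin

(* Let I(x) = sum_{n <= x} f(n)/n log(x/n) = integral_1^x mu_f(t) dt/t. Expanding Lambda_f by
   Dirichlet convolution turns the hypothesis into
     D_- mu_f(x) <= mu_f(x) log x - (1 + tau) I(x) <= D_+ mu_f(x),
   and since I' = mu_f / x this says that I(x) / (log x - D_+)^(1+tau) decreases while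
   I(x) / (log x - D_-)^(1+tau) increases. A constant K separates the two ratios, and feeding
   K (log x - D_+)^(1+tau) <= I(x) <= K (log x - D_-)^(1+tau) back into the inequality bounds
   mu_f(x) with C_f / tau = (1 + tau) K. These bounds give mu_f(e^u) ~ (1 + tau) K u^tau, and the
   Abelian identity L_f(1 + s) = integral_0^oo mu_f(e^(v/s)) e^(-v) dv together with dominated
   convergence yields (s - 1)^tau L_f(s) -> Gamma(tau + 1) (1 + tau) K = Gamma(tau) C_f. *)

lemma le_nat_floor_iff:
  assumes "x \<ge> 0"
  shows "n \<le> nat \<lfloor>x\<rfloor> \<longleftrightarrow> real n \<le> x"
  using assms by (simp add: le_nat_iff le_floor_iff)

lemma nat_floor_divide_of_nat:
  assumes "x \<ge> 0"
  shows "nat \<lfloor>x / real d\<rfloor> = nat \<lfloor>x\<rfloor> div d"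
proof -
  have "\<lfloor>x / real_of_int (int d)\<rfloor> = \<lfloor>x\<rfloor> div int d"
    by (rule floor_divide_real_eq_div) simp
  then show ?thesis
    using assms by (simp add: nat_div_distrib)
qed

lemma sum_divisors_reindex:
  fixes F :: "nat \<Rightarrow> nat \<Rightarrow> 'a::comm_monoid_add"
  shows "(\<Sum>n\<in>{1..N}. \<Sum>d | d dvd n. F d (n div d)) = (\<Sum>d\<in>{1..N}. \<Sum>m\<in>{1..N div d}. F d m)"
proof -
  have "(\<Sum>n\<in>{1..N}. \<Sum>d | d dvd n. F d (n div d)) =
        (\<Sum>(n, d)\<in>Sigma {1..N} (\<lambda>n. {d. d dvd n}). F d (n div d))"
    by (rule sum.Sigma) (auto intro: finite_divisors_nat)
  also have "\<dots> = (\<Sum>(d, m)\<in>Sigma {1..N} (\<lambda>d. {1..N div d}). F d m)"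
  proof (rule sum.reindex_bij_witness[where i = "\<lambda>(d, m). (d * m, d)" and j = "\<lambda>(n, d). (d, n div d)"])
    fix b assume "b \<in> Sigma {1..N} (\<lambda>n. {d. d dvd n})"
    then obtain n d where b: "b = (n, d)" "1 \<le> n" "n \<le> N" "d dvd n" by auto
    then have "d \<le> n" "0 < d" by (auto intro: dvd_imp_le)
    with b show "(case case b of (n, d) \<Rightarrow> (d, n div d) of (d, m) \<Rightarrow> (d * m, d)) = b"
      "(case b of (n, d) \<Rightarrow> (d, n div d)) \<in> Sigma {1..N} (\<lambda>d. {1..N div d})"
      "(case case b of (n, d) \<Rightarrow> (d, n div d) of (d, m) \<Rightarrow> F d m) = (case b of (n, d) \<Rightarrow> F d (n div d))"
      by (auto simp: div_greater_zero_iff div_le_mono)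
  next
    fix a assume "a \<in> Sigma {1..N} (\<lambda>d. {1..N div d})"
    then obtain d m where a: "a = (d, m)" "1 \<le> d" "1 \<le> m" "m \<le> N div d" by auto
    then have "d * m \<le> N" by (meson dual_order.trans mult_le_mono2 times_div_less_eq_dividend)
    with a show "(case case a of (d, m) \<Rightarrow> (d * m, d) of (n, d) \<Rightarrow> (d, n div d)) = a"
      "(case a of (d, m) \<Rightarrow> (d * m, d)) \<in> Sigma {1..N} (\<lambda>n. {d. d dvd n})"
      by auto
  qed
  also have "\<dots> = (\<Sum>d\<in>{1..N}. \<Sum>m\<in>{1..N div d}. F d m)"
    by (rule sum.Sigma[symmetric]) auto
  finally show ?thesis .
qed

lemma muf_nonneg:
  assumes "\<forall>n. f n \<ge> 0"
  shows "muf f x \<ge> 0"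
  unfolding muf_def using assms by (intro sum_nonneg) auto

lemma muf_mono:
  assumes "\<forall>n. f n \<ge> 0" and "x \<le> y"
  shows "muf f x \<le> muf f y"
  unfolding muf_def
proof (rule sum_mono2)
  show "{1..nat \<lfloor>x\<rfloor>} \<subseteq> {1..nat \<lfloor>y\<rfloor>}"
    using assms(2) by (auto intro: order_trans nat_mono floor_mono)
qed (use assms(1) in auto)

lemma one_le_muf:
  assumes "\<forall>n. f n \<ge> 0" and "f 1 = 1" and "x \<ge> 1"
  shows "muf f x \<ge> 1"
proof -
  have "1 \<in> {1..nat \<lfloor>x\<rfloor>}"
    using assms(3) by (simp add: le_nat_floor_iff)
  then have "f 1 / real 1 \<le> muf f x"
    unfolding muf_def using assms(1) by (intro member_le_sum) auto
  then show ?thesis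
    using assms(2) by simp
qed

section \<open>The logarithmic integral of \<mu>_f\<close>

definition muf_integral :: "(nat \<Rightarrow> real) \<Rightarrow> real \<Rightarrow> real" where
  "muf_integral f x = (\<Sum>n\<in>{1..nat \<lfloor>x\<rfloor>}. f n / real n * ln (x / real n))"

lemma muf_integral_pos:
  assumes "\<forall>n. f n \<ge> 0" and "f 1 = 1" and "x > 1"
  shows "muf_integral f x > 0"
proof -
  have "0 \<le> f n / real n * ln (x / real n)" if "n \<in> {1..nat \<lfloor>x\<rfloor>}" for n
    using that assms(1,3) by (simp add: le_nat_floor_iff)
  moreover have "1 \<in> {1..nat \<lfloor>x\<rfloor>}"
    using assms(3) by (simp add: le_nat_floor_iff)
  ultimately have "f 1 / real 1 * ln (x / real 1) \<le> muf_integral f x"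
    unfolding muf_integral_def by (intro member_le_sum) auto
  then show ?thesis
    using assms(2) ln_gt_zero[OF assms(3)] by simp
qed

lemma muf_integral_eq_sum_max:
  assumes "0 < x" "x \<le> z"
  shows "muf_integral f x = (\<Sum>n\<in>{1..nat \<lfloor>z\<rfloor>}. f n / real n * max 0 (ln (x / real n)))"
proof -
  have "(\<Sum>n\<in>{1..nat \<lfloor>z\<rfloor>}. f n / real n * max 0 (ln (x / real n))) =
        (\<Sum>n\<in>{1..nat \<lfloor>x\<rfloor>}. f n / real n * max 0 (ln (x / real n)))"
  proof (rule sum.mono_neutral_right)
    show "{1..nat \<lfloor>x\<rfloor>} \<subseteq> {1..nat \<lfloor>z\<rfloor>}"
      using assms by (auto intro: order_trans nat_mono floor_mono)
    show "\<forall>n\<in>{1..nat \<lfloor>z\<rfloor>} - {1..nat \<lfloor>x\<rfloor>}. f n / real n * max 0 (ln (x / real n)) = 0"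
      using assms by (auto simp: le_nat_floor_iff)
  qed simp
  also have "\<dots> = muf_integral f x"
    unfolding muf_integral_def using assms by (intro sum.cong) (auto simp: le_nat_floor_iff)
  finally show ?thesis ..
qed

lemma continuous_on_muf_integral: "continuous_on {1..z} (muf_integral f)"
proof -
  have "continuous_on {1..z} (\<lambda>x. \<Sum>n\<in>{1..nat \<lfloor>z\<rfloor>}. f n / real n * max 0 (ln (x / real n)))"
    by (intro continuous_intros) auto
  then show ?thesis
    by (rule continuous_on_cong[THEN iffD1, rotated 2]) (auto simp: muf_integral_eq_sum_max)
qed

lemma muf_integral_has_derivative:
  assumes "x > 0" and "x \<notin> \<nat>"
  shows "(muf_integral f has_real_derivative muf f x / x) (at x)"
proof -
  define N where "N = nat \<lfloor>x\<rfloor>"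
  have N_floor: "real N = of_int \<lfloor>x\<rfloor>"
    using assms(1) by (simp add: N_def)
  moreover have "real N \<noteq> x"
    using assms(2) by (metis of_nat_in_Nats)
  ultimately have x_between: "real N < x" "x < real N + 1"
    by linarith+
  have "((\<lambda>t. \<Sum>n\<in>{1..N}. f n / real n * ln (t / real n)) has_real_derivative
          (\<Sum>n\<in>{1..N}. f n / real n * (1 / x))) (at x)"
    using assms(1) by (auto intro!: derivative_eq_intros DERIV_sum)
  moreover have "(\<Sum>n\<in>{1..N}. f n / real n * (1 / x)) = muf f x / x"
    by (simp add: muf_def N_def sum_divide_distrib)
  ultimately have "((\<lambda>t. \<Sum>n\<in>{1..N}. f n / real n * ln (t / real n)) has_real_derivative muf f x / x) (at x)"
    by simp
  then show ?thesis
  proof (rule has_field_derivative_transform_within_open)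
    show "open {real N<..<real N + 1}" "x \<in> {real N<..<real N + 1}"
      using x_between by auto
    show "(\<Sum>n\<in>{1..N}. f n / real n * ln (t / real n)) = muf_integral f t"
      if "t \<in> {real N<..<real N + 1}" for t
    proof -
      have "nat \<lfloor>t\<rfloor> = N"
        using that by (simp add: floor_eq4)
      then show ?thesis
        by (simp add: muf_integral_def)
    qed
  qed
qed

lemma sum_ln_eq_convolution:
  assumes Lam: "\<forall>n\<ge>1. f n * ln (real n) = (\<Sum>d | d dvd n. f d * Lam (n div d))"
  shows "(\<Sum>n\<in>{1..N}. f n / real n * ln (real n)) =
         (\<Sum>d\<in>{1..N}. f d / real d * (\<Sum>m\<in>{1..N div d}. Lam m / real m))"
proof -
  have "f n / real n * ln (real n) = (\<Sum>d | d dvd n. f d / real d * (Lam (n div d) / real (n div d)))"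
    if "n \<in> {1..N}" for n
  proof -
    have divisor_term: "f d * Lam (n div d) / real n = f d / real d * (Lam (n div d) / real (n div d))"
      if "d dvd n" for d
      using \<open>n \<in> {1..N}\<close> that by (elim dvdE) auto
    have "f n / real n * ln (real n) = (\<Sum>d | d dvd n. f d * Lam (n div d)) / real n"
      using Lam \<open>n \<in> {1..N}\<close> by simp
    also have "\<dots> = (\<Sum>d | d dvd n. f d * Lam (n div d) / real n)"
      by (rule sum_divide_distrib)
    also have "\<dots> = (\<Sum>d | d dvd n. f d / real d * (Lam (n div d) / real (n div d)))"
      using divisor_term by (intro sum.cong) auto
    finally show ?thesis .
  qed
  then have "(\<Sum>n\<in>{1..N}. f n / real n * ln (real n)) =
        (\<Sum>n\<in>{1..N}. \<Sum>d | d dvd n. f d / real d * (Lam (n div d) / real (n div d)))"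
    by (rule sum.cong[OF refl])
  also have "\<dots> = (\<Sum>d\<in>{1..N}. \<Sum>m\<in>{1..N div d}. f d / real d * (Lam m / real m))"
    by (rule sum_divisors_reindex)
  finally show ?thesis
    by (simp add: sum_distrib_left)
qed

lemma muf_ln_minus_muf_integral:
  assumes "x > 0"
  shows "muf f x * ln x - muf_integral f x = (\<Sum>n\<in>{1..nat \<lfloor>x\<rfloor>}. f n / real n * ln (real n))"
  unfolding muf_def muf_integral_def sum_distrib_right sum_subtractf[symmetric]
  using assms by (intro sum.cong) (auto simp: ln_div algebra_simps)

lemma Ef_convolution_eq:
  assumes Lam: "\<forall>n\<ge>1. f n * ln (real n) = (\<Sum>d | d dvd n. f d * Lam (n div d))"
    and "x \<ge> 1"
  shows "B * muf f x + (\<Sum>n\<in>{1..nat \<lfloor>x\<rfloor>}. f n / real n * Ef Lam tau B (x / real n))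
         = muf f x * ln x - (1 + tau) * muf_integral f x"
proof -
  define N where "N = nat \<lfloor>x\<rfloor>"
  define S where "S d = (\<Sum>m\<in>{1..N div d}. Lam m / real m)" for d
  have "f n / real n * Ef Lam tau B (x / real n) =
        f n / real n * S n - tau * (f n / real n * ln (x / real n)) - B * (f n / real n)" for n
    using \<open>x \<ge> 1\<close> by (simp add: Ef_def S_def N_def nat_floor_divide_of_nat algebra_simps)
  then have "(\<Sum>n\<in>{1..N}. f n / real n * Ef Lam tau B (x / real n)) =
             (\<Sum>n\<in>{1..N}. f n / real n * S n) - tau * muf_integral f x - B * muf f x"
    by (simp add: muf_def muf_integral_def N_def sum_subtractf sum_distrib_left)
  moreover have "(\<Sum>n\<in>{1..N}. f n / real n * S n) = muf f x * ln x - muf_integral f x"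
    using muf_ln_minus_muf_integral[of x f] sum_ln_eq_convolution[OF Lam, of N] \<open>x \<ge> 1\<close>
    by (simp add: S_def N_def)
  ultimately show ?thesis
    by (simp add: N_def algebra_simps)
qed

lemma muf_integral_sandwich_of_Ef_bounds:
  assumes Lam: "\<forall>n\<ge>1. f n * ln (real n) = (\<Sum>d | d dvd n. f d * Lam (n div d))"
    and "x \<ge> 1"
    and "Dm * muf f x \<le> B * muf f x + (\<Sum>n\<in>{1..nat \<lfloor>x\<rfloor>}. f n / real n * Ef Lam tau B (x / real n))
       \<and> B * muf f x + (\<Sum>n\<in>{1..nat \<lfloor>x\<rfloor>}. f n / real n * Ef Lam tau B (x / real n)) \<le> Dp * muf f x"
  shows "(ln x - Dp) * muf f x \<le> (tau + 1) * muf_integral f x \<and>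
         (tau + 1) * muf_integral f x \<le> (ln x - Dm) * muf f x"
  using assms(3) Ef_convolution_eq[OF Lam \<open>x \<ge> 1\<close>, of B tau] by (simp add: algebra_simps)

section \<open>Two-sided bounds for \<mu>_f\<close>

lemma ln_muf_integral_ratio_has_derivative:
  assumes "\<forall>n. f n \<ge> 0" and "f 1 = 1" and "x > 1" and "x \<notin> \<nat>" and "D < ln x"
  shows "((\<lambda>t. ln (muf_integral f t) - p * ln (ln t - D)) has_real_derivative
           (muf f x * (ln x - D) - p * muf_integral f x) / (x * muf_integral f x * (ln x - D))) (at x)"
proof -
  have "muf_integral f x > 0"
    using assms(1-3) by (rule muf_integral_pos)
  then show ?thesis
    using assms(3,5)
    by (auto intro!: derivative_eq_intros muf_integral_has_derivative[OF _ assms(4)]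
        simp: field_simps)
qed

lemma continuous_on_ln_muf_integral_ratio:
  assumes "\<forall>n. f n \<ge> 0" and "f 1 = 1" and "1 < y" and "D < ln y"
  shows "continuous_on {y..z} (\<lambda>t. ln (muf_integral f t) - p * ln (ln t - D))"
proof -
  have "continuous_on {y..z} (muf_integral f)"
    using assms(3) by (intro continuous_on_subset[OF continuous_on_muf_integral]) auto
  moreover have pos: "muf_integral f t > 0" "D < ln t" if "t \<in> {y..z}" for t
  proof -
    have "1 < t" "ln y \<le> ln t"
      using that assms(3) by auto
    then show "muf_integral f t > 0" "D < ln t"
      using assms(4) muf_integral_pos[OF assms(1,2)] by auto
  qed
  ultimately show ?thesis
    using assms(3) by (intro continuous_intros) (auto dest: pos)
qed

lemma ln_muf_integral_ratio_has_integral: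
  assumes "\<forall>n. f n \<ge> 0" and "f 1 = 1" and "1 < y" and "y \<le> z" and "D < ln y"
  shows "((\<lambda>x. (muf f x * (ln x - D) - p * muf_integral f x) / (x * muf_integral f x * (ln x - D)))
           has_integral (ln (muf_integral f z) - p * ln (ln z - D)) - (ln (muf_integral f y) - p * ln (ln y - D)))
         {y..z}"
proof (rule fundamental_theorem_of_calculus_interior_strong[of "real ` {..nat \<lceil>z\<rceil>}"])
  show "finite (real ` {..nat \<lceil>z\<rceil>})" "y \<le> z"
    using assms(4) by simp_all
  show "continuous_on {y..z} (\<lambda>t. ln (muf_integral f t) - p * ln (ln t - D))"
    using assms(1,2,3,5) by (rule continuous_on_ln_muf_integral_ratio)
  fix x assume x: "x \<in> {y<..<z} - real ` {..nat \<lceil>z\<rceil>}"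
  then have "y < x" "x < z" and x_not_small_nat: "x \<notin> real ` {..nat \<lceil>z\<rceil>}"
    by auto
  then have "1 < x" "ln y < ln x"
    using assms(3) by auto
  then have "D < ln x"
    using assms(5) by linarith
  have "x \<notin> \<nat>"
  proof
    assume "x \<in> \<nat>"
    then obtain n where "x = real n"
      by (auto elim: Nats_cases)
    moreover have "real n \<le> real (nat \<lceil>z\<rceil>)"
      using \<open>x < z\<close> calculation real_nat_ceiling_ge[of z] by linarith
    ultimately show False
      using x_not_small_nat by auto
  qed
  then show "((\<lambda>t. ln (muf_integral f t) - p * ln (ln t - D)) has_vector_derivative
      (muf f x * (ln x - D) - p * muf_integral f x) / (x * muf_integral f x * (ln x - D))) (at x)"
    using ln_muf_integral_ratio_has_derivative[OF assms(1,2) \<open>1 < x\<close> _ \<open>D < ln x\<close>]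
    by (simp add: has_real_derivative_iff_has_vector_derivative)
qed

lemma muf_integral_ratio_eq_exp:
  assumes "\<forall>n. f n \<ge> 0" and "f 1 = 1" and "1 < x" and "D < ln x"
  shows "muf_integral f x / (ln x - D) powr p = exp (ln (muf_integral f x) - p * ln (ln x - D))"
  using assms muf_integral_pos[OF assms(1-3)] by (simp add: exp_diff powr_def)

lemma muf_integral_ratio_increasing:
  assumes "\<forall>n. f n \<ge> 0" and "f 1 = 1" and "1 < y" and "y \<le> z" and "D < ln y"
    and "\<And>x. x \<in> {y..z} \<Longrightarrow> p * muf_integral f x \<le> (ln x - D) * muf f x"
  shows "muf_integral f y / (ln y - D) powr p \<le> muf_integral f z / (ln z - D) powr p"
proof -
  have "ln y \<le> ln z"
    using assms(3,4) by simp
  then have "D < ln z"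
    using assms(5) by linarith
  have "0 \<le> (ln (muf_integral f z) - p * ln (ln z - D)) - (ln (muf_integral f y) - p * ln (ln y - D))"
  proof (rule has_integral_nonneg[OF ln_muf_integral_ratio_has_integral[OF assms(1-5)]])
    fix x assume "x \<in> {y..z}"
    then have "1 < x" "ln y \<le> ln x"
      using assms(3) by auto
    then have "0 < x * muf_integral f x * (ln x - D)"
      using assms(5) muf_integral_pos[OF assms(1,2)] by simp
    moreover have "0 \<le> muf f x * (ln x - D) - p * muf_integral f x"
      using assms(6)[OF \<open>x \<in> {y..z}\<close>] by (simp add: mult.commute)
    ultimately show "0 \<le> (muf f x * (ln x - D) - p * muf_integral f x) / (x * muf_integral f x * (ln x - D))"
      by simp
  qed
  then show ?thesis
    using assms(3-5) \<open>D < ln z\<close> by (simp add: muf_integral_ratio_eq_exp[OF assms(1,2)])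
qed

lemma muf_integral_ratio_decreasing:
  assumes "\<forall>n. f n \<ge> 0" and "f 1 = 1" and "1 < y" and "y \<le> z" and "D < ln y"
    and "\<And>x. x \<in> {y..z} \<Longrightarrow> (ln x - D) * muf f x \<le> p * muf_integral f x"
  shows "muf_integral f z / (ln z - D) powr p \<le> muf_integral f y / (ln y - D) powr p"
proof -
  have "ln y \<le> ln z"
    using assms(3,4) by simp
  then have "D < ln z"
    using assms(5) by linarith
  have "(ln (muf_integral f z) - p * ln (ln z - D)) - (ln (muf_integral f y) - p * ln (ln y - D)) \<le> 0"
  proof (rule has_integral_le[OF ln_muf_integral_ratio_has_integral[OF assms(1-5)] has_integral_0])
    fix x assume "x \<in> {y..z}"
    then have "1 < x" "ln y \<le> ln x"
      using assms(3) by auto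
    then have "0 < x * muf_integral f x * (ln x - D)"
      using assms(5) muf_integral_pos[OF assms(1,2)] by simp
    moreover have "muf f x * (ln x - D) - p * muf_integral f x \<le> 0"
      using assms(6)[OF \<open>x \<in> {y..z}\<close>] by (simp add: mult.commute)
    ultimately show "(muf f x * (ln x - D) - p * muf_integral f x) / (x * muf_integral f x * (ln x - D)) \<le> 0"
      by (simp add: divide_nonpos_pos)
  qed
  then show ?thesis
    using assms(3-5) \<open>D < ln z\<close> by (simp add: muf_integral_ratio_eq_exp[OF assms(1,2)])
qed

lemma exists_between_antimono_mono:
  fixes \<phi> \<psi> :: "'a::{linorder,no_top} \<Rightarrow> 'b::conditionally_complete_linorder"
  assumes "\<And>y z. a < y \<Longrightarrow> y \<le> z \<Longrightarrow> \<phi> z \<le> \<phi> y"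
    and "\<And>y z. a < y \<Longrightarrow> y \<le> z \<Longrightarrow> \<psi> y \<le> \<psi> z"
    and "\<And>x. a < x \<Longrightarrow> \<psi> x \<le> \<phi> x"
  shows "\<exists>k. \<forall>x>a. \<psi> x \<le> k \<and> k \<le> \<phi> x"
proof (intro exI allI impI conjI)
  have le: "\<psi> x \<le> \<phi> z" if "a < x" "a < z" for x z
  proof (cases "x \<le> z")
    case True
    then have "\<psi> x \<le> \<psi> z" using assms(2) that(1) by blast
    also have "\<dots> \<le> \<phi> z" using assms(3) that(2) by blast
    finally show ?thesis .
  next
    case False
    then have "\<psi> x \<le> \<phi> x" using assms(3) that(1) by blast
    also have "\<dots> \<le> \<phi> z" using assms(1) that(2) False by simp
    finally show ?thesis .
  qed
  obtain b where "a < b"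
    using gt_ex by blast
  then have "bdd_below (\<phi> ` {a<..})"
    using le by (intro bdd_belowI) auto
  fix x assume "a < x"
  with \<open>bdd_below (\<phi> ` {a<..})\<close> show "Inf (\<phi> ` {a<..}) \<le> \<phi> x"
    by (intro cInf_lower) auto
  show "\<psi> x \<le> Inf (\<phi> ` {a<..})"
    using \<open>a < x\<close> le \<open>a < b\<close> by (intro cInf_greatest) auto
qed

lemma muf_integral_powr_bounds:
  assumes "\<forall>n. f n \<ge> 0" and "f 1 = 1" and "1 \<le> a" and "p \<ge> 0" and "Dm \<le> Dp"
    and ln_gt: "\<And>x. a < x \<Longrightarrow> Dp < ln x"
    and ineq: "\<And>x. a < x \<Longrightarrow>
      (ln x - Dp) * muf f x \<le> p * muf_integral f x \<and> p * muf_integral f x \<le> (ln x - Dm) * muf f x"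
  shows "\<exists>K>0. \<forall>x>a. K * (ln x - Dp) powr p \<le> muf_integral f x \<and> muf_integral f x \<le> K * (ln x - Dm) powr p"
proof -
  define \<phi> where "\<phi> x = muf_integral f x / (ln x - Dp) powr p" for x
  define \<psi> where "\<psi> x = muf_integral f x / (ln x - Dm) powr p" for x
  have pos: "1 < x" "0 < muf_integral f x" "0 < ln x - Dp" "0 < ln x - Dm" if "a < x" for x
    using that assms(3,5) ln_gt[OF that] muf_integral_pos[OF assms(1,2)] by auto
  have ineq_lower: "(ln x - Dp) * muf f x \<le> p * muf_integral f x"
    and ineq_upper: "p * muf_integral f x \<le> (ln x - Dm) * muf f x" if "a < x" for x
    using ineq[OF that] by simp_all
  have \<phi>_antimono: "\<phi> z \<le> \<phi> y" if "a < y" "y \<le> z" for y z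
    unfolding \<phi>_def
  proof (rule muf_integral_ratio_decreasing[OF assms(1,2) pos(1)[OF that(1)] that(2) ln_gt[OF that(1)]])
    show "(ln x - Dp) * muf f x \<le> p * muf_integral f x" if "x \<in> {y..z}" for x
      using that \<open>a < y\<close> by (intro ineq_lower) simp
  qed
  have \<psi>_mono: "\<psi> y \<le> \<psi> z" if "a < y" "y \<le> z" for y z
    unfolding \<psi>_def
  proof (rule muf_integral_ratio_increasing[OF assms(1,2) pos(1)[OF that(1)] that(2)])
    show "Dm < ln y"
      using pos(4)[OF that(1)] by simp
    show "p * muf_integral f x \<le> (ln x - Dm) * muf f x" if "x \<in> {y..z}" for x
      using that \<open>a < y\<close> by (intro ineq_upper) simp
  qed
  have \<psi>_le_\<phi>: "\<psi> x \<le> \<phi> x" if "a < x" for x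
  proof -
    have "(ln x - Dp) powr p \<le> (ln x - Dm) powr p"
      using pos[OF that] assms(4,5) by (intro powr_mono2) simp_all
    then show ?thesis
      unfolding \<phi>_def \<psi>_def using pos[OF that] by (intro divide_left_mono) simp_all
  qed
  from exists_between_antimono_mono[OF \<phi>_antimono \<psi>_mono \<psi>_le_\<phi>]
  obtain k where k: "\<forall>x>a. \<psi> x \<le> k \<and> k \<le> \<phi> x" ..
  show ?thesis
  proof (intro exI[of _ k] conjI allI impI)
    have "0 < \<psi> (a + 1)"
      unfolding \<psi>_def using pos[of "a + 1"] by simp
    then show "0 < k"
      using k[rule_format, of "a + 1"] by simp
    fix x assume "a < x"
    have "k \<le> muf_integral f x / (ln x - Dp) powr p"
      using conjunct2[OF k[rule_format, OF \<open>a < x\<close>]] unfolding \<phi>_def .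
    then show "k * (ln x - Dp) powr p \<le> muf_integral f x"
      using pos(3)[OF \<open>a < x\<close>] by (simp add: pos_le_divide_eq)
    have "muf_integral f x / (ln x - Dm) powr p \<le> k"
      using conjunct1[OF k[rule_format, OF \<open>a < x\<close>]] unfolding \<psi>_def .
    then show "muf_integral f x \<le> k * (ln x - Dm) powr p"
      using pos(4)[OF \<open>a < x\<close>] by (simp add: pos_divide_le_eq)
  qed
qed

lemma le_of_muf_integral_sandwich:
  assumes "\<forall>n. f n \<ge> 0" and "f 1 = 1" and "1 \<le> a"
    and ineq: "\<And>x. a < x \<Longrightarrow>
      (ln x - Dp) * muf f x \<le> p * muf_integral f x \<and> p * muf_integral f x \<le> (ln x - Dm) * muf f x"
  shows "Dm \<le> Dp"
proof -
  have "(ln (a + 1) - Dp) * muf f (a + 1) \<le> (ln (a + 1) - Dm) * muf f (a + 1)"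
    using ineq[of "a + 1"] by simp
  then have "Dm * muf f (a + 1) \<le> Dp * muf f (a + 1)"
    by (simp add: algebra_simps)
  moreover have "1 \<le> muf f (a + 1)"
    using assms(1-3) by (intro one_le_muf) simp_all
  ultimately show ?thesis
    by (simp add: mult_le_cancel_right)
qed

lemma muf_powr_bounds:
  assumes "\<forall>n. f n \<ge> 0" and "f 1 = 1" and "1 \<le> a" and "p > 0" and "Dm \<le> Dp"
    and ln_gt: "\<And>x. a < x \<Longrightarrow> Dp < ln x"
    and ineq: "\<And>x. a < x \<Longrightarrow>
      (ln x - Dp) * muf f x \<le> p * muf_integral f x \<and> p * muf_integral f x \<le> (ln x - Dm) * muf f x"
  shows "\<exists>K>0. \<forall>x>a. p * K * (ln x - Dp) powr p / (ln x - Dm) \<le> muf f x \<and>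
                     muf f x \<le> p * K * (ln x - Dm) powr p / (ln x - Dp)"
proof -
  from muf_integral_powr_bounds[OF assms(1-3) less_imp_le[OF \<open>p > 0\<close>] assms(5) ln_gt ineq]
  obtain K where "K > 0" and K: "\<forall>x>a. K * (ln x - Dp) powr p \<le> muf_integral f x \<and>
                                        muf_integral f x \<le> K * (ln x - Dm) powr p"
    by blast
  show ?thesis
  proof (intro exI[of _ K] conjI allI impI \<open>K > 0\<close>)
    fix x assume "a < x"
    then have "0 < ln x - Dp" "0 < ln x - Dm"
      using ln_gt[OF \<open>a < x\<close>] \<open>Dm \<le> Dp\<close> by auto
    have "p * K * (ln x - Dp) powr p \<le> p * muf_integral f x"
      using K \<open>a < x\<close> \<open>p > 0\<close> by simp
    also have "\<dots> \<le> (ln x - Dm) * muf f x"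
      using ineq[OF \<open>a < x\<close>] by simp
    finally show "p * K * (ln x - Dp) powr p / (ln x - Dm) \<le> muf f x"
      using \<open>0 < ln x - Dm\<close> by (simp add: pos_divide_le_eq mult.commute)
    have "(ln x - Dp) * muf f x \<le> p * muf_integral f x"
      using ineq[OF \<open>a < x\<close>] by simp
    also have "\<dots> \<le> p * K * (ln x - Dm) powr p"
      using K \<open>a < x\<close> \<open>p > 0\<close> by simp
    finally show "muf f x \<le> p * K * (ln x - Dm) powr p / (ln x - Dp)"
      using \<open>0 < ln x - Dp\<close> by (simp add: pos_le_divide_eq mult.commute)
  qed
qed

section \<open>The Abelian limit of L_f at 1\<close>

lemma muf_min_exp_eq_sum:
  assumes "\<sigma> > 0"
  shows "muf f (min (real N) (exp (v / \<sigma>))) = (\<Sum>m\<in>{1..N}. if \<sigma> * ln (real m) \<le> v then f m / real m else 0)"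
proof -
  have range_eq: "{1..nat \<lfloor>min (real N) (exp (v / \<sigma>))\<rfloor>} = {m\<in>{1..N}. \<sigma> * ln (real m) \<le> v}"
  proof -
    have "m \<le> nat \<lfloor>min (real N) (exp (v / \<sigma>))\<rfloor> \<longleftrightarrow> m \<le> N \<and> \<sigma> * ln (real m) \<le> v"
      if "1 \<le> m" for m
    proof -
      have "real m \<le> exp (v / \<sigma>) \<longleftrightarrow> ln (real m) \<le> v / \<sigma>"
        using that ln_le_cancel_iff[of "real m" "exp (v / \<sigma>)"] by simp
      then show ?thesis
        using assms by (simp add: le_nat_floor_iff pos_le_divide_eq mult.commute)
    qed
    then show ?thesis
      by auto
  qed
  show ?thesis
    unfolding muf_def range_eq by (rule sum.inter_filter) simp
qed

lemma muf_min_exp_has_integral: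
  assumes "\<sigma> > 0"
  shows "((\<lambda>v. muf f (min (real N) (exp (v / \<sigma>))) * exp (- v))
           has_integral (\<Sum>m\<in>{1..N}. f m / real m powr (1 + \<sigma>))) {0..}"
proof -
  have "((\<lambda>v. f m / real m * (if \<sigma> * ln (real m) \<le> v then exp (- v) else 0))
          has_integral f m / real m powr (1 + \<sigma>)) {0..}" if "m \<in> {1..N}" for m
  proof -
    have "((\<lambda>v. exp (- 1 * v)) has_integral exp (- 1 * (\<sigma> * ln (real m))) / 1) {\<sigma> * ln (real m)..}"
      by (rule has_integral_exp_minus_to_infinity) simp
    moreover have "0 \<le> \<sigma> * ln (real m)"
      using that assms by simp
    ultimately have "((\<lambda>v. if v \<in> {\<sigma> * ln (real m)..} then exp (- v) else 0) has_integral
                      exp (- (\<sigma> * ln (real m)))) {0..}"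
      by (subst has_integral_restrict) auto
    then have tail: "((\<lambda>v. if \<sigma> * ln (real m) \<le> v then exp (- v) else 0) has_integral
                      exp (- (\<sigma> * ln (real m)))) {0..}"
      by simp
    have "f m / real m * exp (- (\<sigma> * ln (real m))) = f m / real m powr (1 + \<sigma>)"
      using that by (simp add: powr_def exp_add exp_minus distrib_right field_simps)
    then show ?thesis
      using has_integral_mult_right[OF tail, of "f m / real m"] by simp
  qed
  then have "((\<lambda>v. \<Sum>m\<in>{1..N}. f m / real m * (if \<sigma> * ln (real m) \<le> v then exp (- v) else 0))
          has_integral (\<Sum>m\<in>{1..N}. f m / real m powr (1 + \<sigma>))) {0..}"
    by (intro has_integral_sum) auto
  moreover have "(\<Sum>m\<in>{1..N}. f m / real m * (if \<sigma> * ln (real m) \<le> v then exp (- v) else 0)) =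
                 muf f (min (real N) (exp (v / \<sigma>))) * exp (- v)" for v
    unfolding muf_min_exp_eq_sum[OF assms] sum_distrib_right by (intro sum.cong) auto
  ultimately show ?thesis
    by simp
qed

lemma muf_exp_le_polynomial:
  assumes "\<forall>n. f n \<ge> 0" and "((\<lambda>u. muf f (exp u) / u powr tau) \<longlongrightarrow> L) at_top"
  shows "\<exists>A\<ge>0. \<exists>c\<ge>0. \<forall>u\<ge>0. muf f (exp u) \<le> A + c * u powr tau"
proof -
  have "\<forall>\<^sub>F u in at_top. muf f (exp u) / u powr tau < \<bar>L\<bar> + 1"
    by (rule order_tendstoD(2)[OF assms(2)]) simp
  then obtain U where U: "\<And>u. U \<le> u \<Longrightarrow> muf f (exp u) / u powr tau < \<bar>L\<bar> + 1"
    by (auto simp: eventually_at_top_linorder)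
  define A where "A = muf f (exp (max U 1))"
  show ?thesis
  proof (intro exI conjI allI impI)
    show "0 \<le> A" "0 \<le> \<bar>L\<bar> + 1"
      unfolding A_def using muf_nonneg[OF assms(1)] by simp_all
    fix u :: real assume "0 \<le> u"
    show "muf f (exp u) \<le> A + (\<bar>L\<bar> + 1) * u powr tau"
    proof (cases "max U 1 \<le> u")
      case True
      then have "muf f (exp u) < (\<bar>L\<bar> + 1) * u powr tau"
        using U[of u] by (simp add: divide_less_eq)
      then show ?thesis
        using \<open>0 \<le> A\<close> by simp
    next
      case False
      then have "u \<le> max U 1"
        by (meson nle_le)
      then have "muf f (exp u) \<le> A"
        unfolding A_def by (intro muf_mono[OF assms(1)]) simp
      then show ?thesis
        by (simp add: add_increasing2)
    qed
  qed
qed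

lemma Lser_has_integral:
  assumes "\<forall>n. f n \<ge> 0" and "tau \<ge> 0" and "\<sigma> > 0"
    and bound: "\<And>u. u \<ge> 0 \<Longrightarrow> muf f (exp u) \<le> A + c * u powr tau"
  shows "((\<lambda>v. muf f (exp (v / \<sigma>)) * exp (- v)) has_integral Lser f (1 + \<sigma>)) {0..}"
proof -
  define g where "g v = muf f (exp (v / \<sigma>)) * exp (- v)" for v
  define P where "P N v = muf f (min (real N) (exp (v / \<sigma>))) * exp (- v)" for N v
  define h where "h v = A * exp (- v) + c / \<sigma> powr tau * (v powr tau / exp v)" for v
  have P_integral: "(P N has_integral (\<Sum>n<N. f (Suc n) / real (Suc n) powr (1 + \<sigma>))) {0..}" for N
    using muf_min_exp_has_integral[OF assms(3), of f N]
    unfolding P_def by (simp add: sum.atLeast1_atMost_eq)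
  have "((\<lambda>v::real. exp (- v)) has_integral 1) {0..}"
    using has_integral_exp_minus_to_infinity[of 1 0] by simp
  moreover have "((\<lambda>v. v powr tau / exp v) has_integral Gamma (tau + 1)) {0..}"
    using Gamma_integral_real[of "tau + 1"] assms(2) by simp
  ultimately have "h integrable_on {0..}"
    unfolding h_def by (intro integrable_add integrable_on_mult_right has_integral_integrable)
  moreover have "norm (P N v) \<le> h v" if "v \<in> {0..}" for N v
  proof -
    have "muf f (min (real N) (exp (v / \<sigma>))) \<le> muf f (exp (v / \<sigma>))"
      using assms(1) by (intro muf_mono) simp_all
    also have "\<dots> \<le> A + c * (v / \<sigma>) powr tau"
      using that assms(3) by (intro bound) simp
    finally show ?thesis
      using that assms(3) muf_nonneg[OF assms(1)]
      by (simp add: P_def h_def powr_divide exp_minus field_simps mult_right_mono)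
  qed
  moreover have "(\<lambda>N. P N v) \<longlonglongrightarrow> g v" for v
  proof (rule tendsto_eventually)
    show "\<forall>\<^sub>F N in sequentially. P N v = g v"
      using eventually_ge_at_top[of "nat \<lceil>exp (v / \<sigma>)\<rceil>"]
      by eventually_elim (simp add: P_def g_def min_absorb2 real_nat_ceiling_ge order_trans)
  qed
  ultimately have "g integrable_on {0..}" and lim: "(\<lambda>N. integral {0..} (P N)) \<longlonglongrightarrow> integral {0..} g"
    using dominated_convergence[of P "{0..}" h g] P_integral by blast+
  moreover have "(\<lambda>n. f (Suc n) / real (Suc n) powr (1 + \<sigma>)) sums integral {0..} g"
    using lim unfolding sums_def integral_unique[OF P_integral] .
  ultimately show ?thesis
    unfolding Lser_def g_def[abs_def] by (simp add: sums_unique[symmetric] integrable_integral)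
qed

lemma tendsto_powr_mult_muf_exp_div:
  assumes "tau > 0" and lim: "((\<lambda>u. muf f (exp u) / u powr tau) \<longlongrightarrow> L) at_top" and "v \<ge> 0"
  shows "((\<lambda>\<sigma>. \<sigma> powr tau * muf f (exp (v / \<sigma>))) \<longlongrightarrow> L * v powr tau) (at_right 0)"
proof (cases "v = 0")
  case True
  have "\<forall>\<^sub>F \<sigma> in at_right (0::real). 0 \<le> \<sigma>"
    using eventually_at_right_less[of 0] by (rule eventually_mono) simp
  then have "((\<lambda>\<sigma>::real. \<sigma> powr tau) \<longlongrightarrow> 0) (at_right 0)"
    using assms(1) by (intro tendsto_zero_powrI tendsto_ident_at) auto
  then have "((\<lambda>\<sigma>::real. \<sigma> powr tau * muf f 1) \<longlongrightarrow> 0 * muf f 1) (at_right 0)"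
    by (rule tendsto_mult_right)
  then show ?thesis
    using True by simp
next
  case False
  with \<open>v \<ge> 0\<close> have "v > 0"
    by simp
  have "filterlim (\<lambda>\<sigma>. v * inverse \<sigma>) at_top (at_right (0::real))"
    using \<open>v > 0\<close> by (intro filterlim_tendsto_pos_mult_at_top[OF tendsto_const] filterlim_inverse_at_top_right)
  then have "((\<lambda>\<sigma>. v powr tau * (muf f (exp (v * inverse \<sigma>)) / (v * inverse \<sigma>) powr tau)) \<longlongrightarrow> v powr tau * L)
               (at_right 0)"
    by (intro tendsto_mult_left filterlim_compose[OF lim])
  moreover have "\<forall>\<^sub>F \<sigma> in at_right 0. v powr tau * (muf f (exp (v * inverse \<sigma>)) / (v * inverse \<sigma>) powr tau) =
                                         \<sigma> powr tau * muf f (exp (v / \<sigma>))"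
    using eventually_at_right_less[of 0]
    by eventually_elim (use \<open>v > 0\<close> in \<open>simp add: powr_divide divide_inverse[symmetric] field_simps\<close>)
  ultimately show ?thesis
    by (simp add: tendsto_cong mult.commute)
qed

lemma Lser_tendsto_at_right_1:
  assumes "\<forall>n. f n \<ge> 0" and "tau > 0" and lim: "((\<lambda>u. muf f (exp u) / u powr tau) \<longlongrightarrow> L) at_top"
  shows "((\<lambda>s. (s - 1) powr tau * Lser f s) \<longlongrightarrow> Gamma (tau + 1) * L) (at_right 1)"
proof -
  obtain A c where "A \<ge> 0" "c \<ge> 0" and bound: "\<And>u. u \<ge> 0 \<Longrightarrow> muf f (exp u) \<le> A + c * u powr tau"
    using muf_exp_le_polynomial[OF assms(1) lim] by blast
  define G where "G \<sigma> v = \<sigma> powr tau * muf f (exp (v / \<sigma>)) * exp (- v)" for \<sigma> v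
  define h where "h v = A * exp (- v) + c * (v powr tau / exp v)" for v
  define g where "g v = L * (v powr tau / exp v)" for v
  have \<Gamma>_integral: "((\<lambda>v. v powr tau / exp v) has_integral Gamma (tau + 1)) {0..}"
    using Gamma_integral_real[of "tau + 1"] assms(2) by simp
  have "((\<lambda>v::real. exp (- v)) has_integral 1) {0..}"
    using has_integral_exp_minus_to_infinity[of 1 0] by simp
  then have h_integrable: "h integrable_on {0..}"
    unfolding h_def using \<Gamma>_integral
    by (intro integrable_add integrable_on_mult_right has_integral_integrable)
  have G_integral: "(G \<sigma> has_integral \<sigma> powr tau * Lser f (1 + \<sigma>)) {0..}" if "\<sigma> > 0" for \<sigma>
  proof -
    have "((\<lambda>v. \<sigma> powr tau * (muf f (exp (v / \<sigma>)) * exp (- v))) has_integral \<sigma> powr tau * Lser f (1 + \<sigma>)) {0..}"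
      by (intro has_integral_mult_right Lser_has_integral[OF assms(1) less_imp_le[OF assms(2)] that bound])
    then show ?thesis
      unfolding G_def[abs_def] by (simp add: mult.assoc)
  qed
  have G_le: "norm (G \<sigma> v) \<le> h v" if "0 < \<sigma>" "\<sigma> \<le> 1" "v \<in> {0..}" for \<sigma> v
  proof -
    have "\<sigma> powr tau * muf f (exp (v / \<sigma>)) \<le> \<sigma> powr tau * (A + c * (v / \<sigma>) powr tau)"
      using that by (intro mult_left_mono bound) simp_all
    also have "\<dots> = \<sigma> powr tau * A + c * v powr tau"
      using that by (simp add: powr_divide field_simps)
    also have "\<dots> \<le> A + c * v powr tau"
      using that \<open>A \<ge> 0\<close> assms(2) by (simp add: mult_left_le_one_le powr_le1)
    finally show ?thesis
      using muf_nonneg[OF assms(1)] that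
      by (simp add: G_def h_def exp_minus field_simps mult_right_mono)
  qed
  have G_tendsto: "((\<lambda>\<sigma>. G \<sigma> v) \<longlongrightarrow> g v) (at_right 0)" if "v \<in> {0..}" for v
    using tendsto_mult_right[OF tendsto_powr_mult_muf_exp_div[OF assms(2) lim], of v "exp (- v)"] that
    by (simp add: G_def g_def exp_minus field_simps)
  show ?thesis
  proof (rule tendsto_at_right_sequentially[of 1 2])
    fix S :: "nat \<Rightarrow> real"
    assume S: "\<And>n. 1 < S n" "\<And>n. S n < 2" and "S \<longlonglongrightarrow> 1"
    then have \<sigma>_lim: "filterlim (\<lambda>n. S n - 1) (at_right 0) sequentially"
      by (intro tendsto_imp_filterlim_at_right) (auto intro: always_eventually simp: LIM_zero)
    have "G (S n - 1) integrable_on {0..}" for n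
      using S(1)[of n] by (intro has_integral_integrable[OF G_integral]) simp
    moreover have "norm (G (S n - 1) v) \<le> h v" if "v \<in> {0..}" for n v
      using S(1,2)[of n] that by (intro G_le) auto
    moreover have "(\<lambda>n. G (S n - 1) v) \<longlonglongrightarrow> g v" if "v \<in> {0..}" for v
      using filterlim_compose[OF G_tendsto[OF that] \<sigma>_lim] .
    ultimately have "(\<lambda>n. integral {0..} (G (S n - 1))) \<longlonglongrightarrow> integral {0..} g"
      by (rule dominated_convergence(2)[OF _ h_integrable])
    moreover have "integral {0..} g = Gamma (tau + 1) * L"
      unfolding g_def using has_integral_mult_right[OF \<Gamma>_integral, of L] by (simp add: integral_unique)
    moreover have "integral {0..} (G (S n - 1)) = (S n - 1) powr tau * Lser f (S n)" for n
      using G_integral[of "S n - 1"] S(1)[of n] by (simp add: integral_unique)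
    ultimately show "(\<lambda>n. (S n - 1) powr tau * Lser f (S n)) \<longlonglongrightarrow> Gamma (tau + 1) * L"
      by simp
  qed simp
qed

lemma tendsto_muf_exp_div_powr:
  assumes bounds: "\<forall>x>a. c * (ln x - Dp) powr (tau + 1) / (ln x - Dm) \<le> muf f x \<and>
                              muf f x \<le> c * (ln x - Dm) powr (tau + 1) / (ln x - Dp)"
  shows "((\<lambda>u. muf f (exp u) / u powr tau) \<longlongrightarrow> c) at_top"
proof (rule real_tendsto_sandwich)
  have "((\<lambda>u::real. (u - Dp) powr (tau + 1) / (u - Dm) / u powr tau) \<longlongrightarrow> 1) at_top"
    by real_asymp
  from tendsto_mult_left[OF this, of c]
  show "((\<lambda>u. c * (u - Dp) powr (tau + 1) / (u - Dm) / u powr tau) \<longlongrightarrow> c) at_top"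
    by simp
  have "((\<lambda>u::real. (u - Dm) powr (tau + 1) / (u - Dp) / u powr tau) \<longlongrightarrow> 1) at_top"
    by real_asymp
  from tendsto_mult_left[OF this, of c]
  show "((\<lambda>u. c * (u - Dm) powr (tau + 1) / (u - Dp) / u powr tau) \<longlongrightarrow> c) at_top"
    by simp
  have "\<forall>\<^sub>F u in at_top. a < exp u"
    using exp_at_top by (simp add: filterlim_at_top_dense)
  then have large: "\<forall>\<^sub>F u in at_top. a < exp u \<and> 0 < u"
    using eventually_gt_at_top[of 0] by (rule eventually_conj)
  show "\<forall>\<^sub>F u in at_top. c * (u - Dp) powr (tau + 1) / (u - Dm) / u powr tau \<le> muf f (exp u) / u powr tau"
    using large by eventually_elim (rule divide_right_mono, use bounds in force, simp)
  show "\<forall>\<^sub>F u in at_top. muf f (exp u) / u powr tau \<le> c * (u - Dm) powr (tau + 1) / (u - Dp) / u powr tau"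
    using large by eventually_elim (rule divide_right_mono, use bounds in force, simp)
qed

lemma mult_powr_one_minus_div_eq:
  fixes c L t D1 D2 :: real
  assumes "L > 0" and "D1 < L"
  shows "c * L powr t * (1 - D1 / L) powr (t + 1) / (1 - D2 / L) = c * (L - D1) powr (t + 1) / (L - D2)"
proof -
  have "1 - D1 / L = (L - D1) / L" "1 - D2 / L = (L - D2) / L"
    using assms(1) by (simp_all add: field_simps)
  moreover have "L powr (t + 1) = L powr t * L"
    using assms(1) by (simp add: powr_add)
  ultimately show ?thesis
    using assms by (simp add: powr_divide field_simps)
qed

lemma Lser_tendsto_of_muf_bounds:
  assumes "\<forall>n. f n \<ge> 0" and "tau > 0"
    and "\<forall>x>a. c * (ln x - Dp) powr (tau + 1) / (ln x - Dm) \<le> muf f x \<and>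
                muf f x \<le> c * (ln x - Dm) powr (tau + 1) / (ln x - Dp)"
  shows "((\<lambda>s. (s - 1) powr tau * Lser f s) \<longlongrightarrow> Gamma tau * (tau * c)) (at_right 1)"
proof -
  have "tau \<notin> \<int>\<^sub>\<le>\<^sub>0"
    using assms(2) nonpos_Ints_nonpos by force
  then have "Gamma (tau + 1) * c = Gamma tau * (tau * c)"
    by (simp add: Gamma_plus1)
  with Lser_tendsto_at_right_1[OF assms(1,2) tendsto_muf_exp_div_powr[OF assms(3)]] show ?thesis
    by (simp only:)
qed

lemma muf_bounds_one_minus_div:
  assumes "1 \<le> a" and "Dm \<le> Dp" and "\<And>x. a < x \<Longrightarrow> Dp < ln x"
    and bounds: "\<forall>x>a. c * (ln x - Dp) powr (tau + 1) / (ln x - Dm) \<le> muf f x \<and>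
                        muf f x \<le> c * (ln x - Dm) powr (tau + 1) / (ln x - Dp)"
    and "a < x"
  shows "c * ln x powr tau * (1 - Dp / ln x) powr (tau + 1) / (1 - Dm / ln x) \<le> muf f x"
    and "muf f x \<le> c * ln x powr tau * (1 - Dm / ln x) powr (tau + 1) / (1 - Dp / ln x)"
proof -
  have "0 < ln x" "Dp < ln x"
    using assms(1,3,5) by auto
  moreover from this have "Dm < ln x"
    using assms(2) by linarith
  ultimately show "c * ln x powr tau * (1 - Dp / ln x) powr (tau + 1) / (1 - Dm / ln x) \<le> muf f x"
    and "muf f x \<le> c * ln x powr tau * (1 - Dm / ln x) powr (tau + 1) / (1 - Dp / ln x)"
    using bounds \<open>a < x\<close> by (simp_all add: mult_powr_one_minus_div_eq)
qed

theorem lemma2: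
  fixes f Lam :: "nat \<Rightarrow> real" and tau B Dm Dp x0 :: real
  assumes mult: "multiplicative f"
    and nonneg: "\<forall>n. f n \<ge> 0"
    and tau: "tau > 0"
    and Lam: "\<forall>n\<ge>1. f n * ln (real n) = (\<Sum>d | d dvd n. f d * Lam (n div d))"
    and hyp: "\<forall>x\<ge>x0.
       Dm * muf f x \<le> B * muf f x + (\<Sum>n\<in>{1..nat \<lfloor>x\<rfloor>}. f n / real n * Ef Lam tau B (x / real n))
     \<and> B * muf f x + (\<Sum>n\<in>{1..nat \<lfloor>x\<rfloor>}. f n / real n * Ef Lam tau B (x / real n)) \<le> Dp * muf f x"
  shows "\<exists>C. ((\<lambda>s. (s - 1) powr tau * Lser f s) \<longlongrightarrow> Gamma tau * C) (at_right 1)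
    \<and> (\<forall>x. x > max x0 (exp Dp) \<and> x > 1 \<longrightarrow>
         C / tau * ln x powr tau * (1 - Dp / ln x) powr (tau + 1) / (1 - Dm / ln x) \<le> muf f x
       \<and> muf f x \<le> C / tau * ln x powr tau * (1 - Dm / ln x) powr (tau + 1) / (1 - Dp / ln x))"
proof -
  have f1: "f 1 = 1"
    using mult by (simp add: multiplicative_def)
  define a where "a = max (max x0 (exp Dp)) 1"
  have "1 \<le> a" "0 < tau + 1"
    using tau by (simp_all add: a_def)
  have ln_gt: "Dp < ln x" if "a < x" for x
    using that ln_less_cancel_iff[of "exp Dp" x] by (simp add: a_def)
  have ineq: "(ln x - Dp) * muf f x \<le> (tau + 1) * muf_integral f x \<and>
              (tau + 1) * muf_integral f x \<le> (ln x - Dm) * muf f x" if "a < x" for x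
    using that hyp by (intro muf_integral_sandwich_of_Ef_bounds[OF Lam, where B = B]) (simp_all add: a_def)
  have "Dm \<le> Dp"
    using nonneg f1 \<open>1 \<le> a\<close> ineq by (rule le_of_muf_integral_sandwich)
  from muf_powr_bounds[OF nonneg f1 \<open>1 \<le> a\<close> \<open>0 < tau + 1\<close> this ln_gt ineq]
  obtain K where bounds: "\<forall>x>a. (tau + 1) * K * (ln x - Dp) powr (tau + 1) / (ln x - Dm) \<le> muf f x \<and>
                                 muf f x \<le> (tau + 1) * K * (ln x - Dm) powr (tau + 1) / (ln x - Dp)"
    by blast
  have "((\<lambda>s. (s - 1) powr tau * Lser f s) \<longlongrightarrow> Gamma tau * (tau * ((tau + 1) * K))) (at_right 1)"
    using nonneg tau bounds by (rule Lser_tendsto_of_muf_bounds)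
  moreover have "a < x" if "max x0 (exp Dp) < x \<and> 1 < x" for x
    using that by (simp add: a_def)
  ultimately show ?thesis
    using muf_bounds_one_minus_div[OF \<open>1 \<le> a\<close> \<open>Dm \<le> Dp\<close> ln_gt bounds] tau
    by (intro exI[of _ "tau * ((tau + 1) * K)"]) simp
qed

end
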